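(* Consider the job set $J$ described in the context with $n\ge2$ and $p_\ell$ sufficiently large. Let $\sigma=(M_1,M_2)$ be a schedule of $J$ with $\omega_1(\sigma)=1$, $\omega_2(\sigma)=0$ and $\ell\in M_1$. Then $\sigma$ can be improved, by a sequence of improving 3-swaps, to a schedule with $\omega_1=0$ and $\omega_2=1$.
   Context: Two identical machines; a schedule $\sigma=(M_1,M_2)$ partitions the jobs into sets processed on machines 1 and 2, with loads $L_i=\sum_{j\in M_i}p_j$ and makespan $\max_iL_i$. Fix $n$ and the job set $J=\{a_i,b_i,c_i:1\le i\le n\}\cup\{\ell\}$ with $p_{a_i}=2^{n+i+1}+2^{i-1}$, $p_{b_i}=2^{n+i}$, $p_{c_i}=2^{n+i-1}+2^{i-1}$, and $p_\ell$ a sufficiently large number. For each $i$ define $\omega_i(\sigma)=0$ if $a_i\in M_1$ and $b_i,c_i\in M_2$; $\omega_i(\sigma)=1$ if $a_i\in M_2$ and $b_i,c_i\in M_1$; and $\omega_i(\sigma)=-1$ otherwise. A 3-swap interchanges the machine assignments of exactly three jobs (some on each machine); it is improving if the makespan strictly decreases. *)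

theory Defs
  imports Main
begin

datatype job = JA nat | JB nat | JC nat | JL

definition jobs :: "nat \<Rightarrow> job set" where
  "jobs n = {JA i | i. 1 \<le> i \<and> i \<le> n} \<union> {JB i | i. 1 \<le> i \<and> i \<le> n}
            \<union> {JC i | i. 1 \<le> i \<and> i \<le> n} \<union> {JL}"

fun ptime :: "nat \<Rightarrow> nat \<Rightarrow> job \<Rightarrow> nat" where
  "ptime n pl (JA i) = 2^(n+i+1) + 2^(i-1)"
| "ptime n pl (JB i) = 2^(n+i)"
| "ptime n pl (JC i) = 2^(n+i-1) + 2^(i-1)"
| "ptime n pl JL = pl"

text \<open>A schedule is represented by the set M1 of jobs on machine 1; M2 = jobs n - M1.\<close>
definition load :: "nat \<Rightarrow> nat \<Rightarrow> job set \<Rightarrow> nat" where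
  "load n pl S = (\<Sum>j\<in>S. ptime n pl j)"

definition makespan :: "nat \<Rightarrow> nat \<Rightarrow> job set \<Rightarrow> nat" where
  "makespan n pl M1 = max (load n pl M1) (load n pl (jobs n - M1))"

definition omega :: "nat \<Rightarrow> job set \<Rightarrow> nat \<Rightarrow> int" where
  "omega n M1 i =
     (if JA i \<in> M1 \<and> JB i \<in> jobs n - M1 \<and> JC i \<in> jobs n - M1 then 0
      else if JA i \<in> jobs n - M1 \<and> JB i \<in> M1 \<and> JC i \<in> M1 then 1
      else -1)"

definition improving_3swap :: "nat \<Rightarrow> nat \<Rightarrow> job set \<Rightarrow> job set \<Rightarrow> bool" where
  "improving_3swap n pl M1 M1' \<longleftrightarrow>
     M1 \<subseteq> jobs n \<and>
     (\<exists>S. S \<subseteq> jobs n \<and> card S = 3 \<and> S \<inter> M1 \<noteq> {} \<and> S - M1 \<noteq> {} \<and>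
          M1' = (M1 - S) \<union> (S - M1)) \<and>
     makespan n pl M1' < makespan n pl M1"

end

(* Once p_l is at least the total length of all other jobs, the machine holding l determines
   the makespan, so a 3-swap keeping l in place is improving exactly when it lowers the load of
   that machine. With x = 2^n the jobs of pair i = k + 1 have lengths 2^k (4x+1), 2^k 2x and
   2^k (x+1). Swapping a_(i+1) against {a_i, b_(i+1)} lowers the load by 2^k, and then swapping
   {b_i, c_i} against c_(i+1) lowers it by 2^k (x - 1), turning omega_i = 1, omega_(i+1) = 0
   into omega_i = 0, omega_(i+1) = 1. *)

theory Submission
  imports Defs
begin

lemma mem_jobs_iff [simp]:
  "JA i \<in> jobs n \<longleftrightarrow> 1 \<le> i \<and> i \<le> n"
  "JB i \<in> jobs n \<longleftrightarrow> 1 \<le> i \<and> i \<le> n"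
  "JC i \<in> jobs n \<longleftrightarrow> 1 \<le> i \<and> i \<le> n"
  "JL \<in> jobs n"
  unfolding jobs_def by auto

lemma finite_jobs: "finite (jobs n)"
proof -
  have "jobs n = JA ` {1..n} \<union> JB ` {1..n} \<union> JC ` {1..n} \<union> {JL}"
    unfolding jobs_def by auto
  then show ?thesis by simp
qed

lemma ptime_Suc:
  "ptime n pl (JA (Suc k)) = 2^k * (4 * 2^n + 1)"
  "ptime n pl (JB (Suc k)) = 2^k * (2 * 2^n)"
  "ptime n pl (JC (Suc k)) = 2^k * (2^n + 1)"
  by (simp_all add: power_add algebra_simps)

lemma omega_eq_0_iff:
  assumes "M1 \<subseteq> jobs n" "1 \<le> i" "i \<le> n"
  shows "omega n M1 i = 0 \<longleftrightarrow> JA i \<in> M1 \<and> JB i \<notin> M1 \<and> JC i \<notin> M1"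
  using assms unfolding omega_def by auto

lemma omega_eq_1_iff:
  assumes "M1 \<subseteq> jobs n" "1 \<le> i" "i \<le> n"
  shows "omega n M1 i = 1 \<longleftrightarrow> JA i \<notin> M1 \<and> JB i \<in> M1 \<and> JC i \<in> M1"
  using assms unfolding omega_def by auto

lemma load_exchange:
  assumes "finite M" "finite Y" "X \<subseteq> M" "Y \<inter> M = {}"
  shows "load n pl (M - X \<union> Y) + load n pl X = load n pl M + load n pl Y"
proof -
  have "load n pl (M - X \<union> Y) = load n pl (M - X) + load n pl Y"
    unfolding load_def using assms by (intro sum.union_disjoint) auto
  moreover have "load n pl M = load n pl (M - X) + load n pl X"
    unfolding load_def using assms by (intro sum.subset_diff) auto
  ultimately show ?thesis by simp
qed

lemma makespan_eq_load:
  assumes "M \<subseteq> jobs n" "JL \<in> M" "load n 0 (jobs n - {JL}) \<le> pl"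
  shows "makespan n pl M = load n pl M"
proof -
  have "load n pl (jobs n - M) \<le> load n pl (jobs n - {JL})"
    unfolding load_def using assms finite_jobs by (intro sum_mono2) auto
  also have "\<dots> = load n 0 (jobs n - {JL})"
  proof -
    have "ptime n pl j = ptime n 0 j" if "j \<noteq> JL" for j
      using that by (cases j) auto
    then show ?thesis unfolding load_def by (intro sum.cong) auto
  qed
  also have "\<dots> \<le> pl" by fact
  also have "pl \<le> load n pl M"
    unfolding load_def
    using member_le_sum[OF assms(2) _ finite_subset[OF assms(1) finite_jobs], of "ptime n pl"] by simp
  finally show ?thesis unfolding makespan_def by simp
qed

lemma improving_3swapI:
  assumes M1: "M1 \<subseteq> jobs n" "JL \<in> M1" and pl: "load n 0 (jobs n - {JL}) \<le> pl"
    and X: "X \<subseteq> M1" "X \<noteq> {}" "JL \<notin> X" and Y: "Y \<subseteq> jobs n - M1" "Y \<noteq> {}"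
    and card: "card (X \<union> Y) = 3" and less: "load n pl Y < load n pl X"
  shows "improving_3swap n pl M1 (M1 - X \<union> Y)"
  unfolding improving_3swap_def
proof (intro conjI exI)
  let ?M1' = "M1 - X \<union> Y"
  have M1': "?M1' \<subseteq> jobs n" "JL \<in> ?M1'" using M1 X Y by auto
  have "finite M1" "finite Y"
    using finite_subset[OF _ finite_jobs] M1 Y by auto
  then have "load n pl ?M1' + load n pl X = load n pl M1 + load n pl Y"
    using X Y by (intro load_exchange) auto
  then show "makespan n pl ?M1' < makespan n pl M1"
    using makespan_eq_load[OF M1 pl] makespan_eq_load[OF M1' pl] less by simp
  show "?M1' = M1 - (X \<union> Y) \<union> (X \<union> Y - M1)" using X Y by auto
qed (use M1 X Y card in auto)

lemma exchange_adjacent_pairs: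
  assumes i: "1 \<le> i" "i < n" and pl: "load n 0 (jobs n - {JL}) \<le> pl"
    and M1: "M1 \<subseteq> jobs n" "JL \<in> M1"
    and omega: "omega n M1 i = 1" "omega n M1 (i + 1) = 0"
  shows "\<exists>M1'. (improving_3swap n pl)\<^sup>*\<^sup>* M1 M1' \<and> omega n M1' i = 0 \<and> omega n M1' (i + 1) = 1"
proof -
  obtain k where k: "i = Suc k" using i by (cases i) auto
  have before: "JA i \<notin> M1" "JB i \<in> M1" "JC i \<in> M1" "JA (i + 1) \<in> M1" "JB (i + 1) \<notin> M1"
    "JC (i + 1) \<notin> M1"
    using omega omega_eq_0_iff[OF M1(1)] omega_eq_1_iff[OF M1(1)] i by auto
  define M2 where "M2 = M1 - {JA (i + 1)} \<union> {JA i, JB (i + 1)}"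
  define M3 where "M3 = M2 - {JB i, JC i} \<union> {JC (i + 1)}"
  have M2: "M2 \<subseteq> jobs n" "JL \<in> M2" using M1 i unfolding M2_def by auto
  have "load n pl {JA i, JB (i + 1)} < load n pl {JA (i + 1)}"
    unfolding load_def k by (simp add: ptime_Suc algebra_simps)
  then have step1: "improving_3swap n pl M1 M2"
    unfolding M2_def using M1 before i by (intro improving_3swapI[OF M1 pl]) auto
  have "load n pl {JC (i + 1)} < load n pl {JB i, JC i}"
    unfolding load_def k using i by (simp add: ptime_Suc algebra_simps)
  then have step2: "improving_3swap n pl M2 M3"
    unfolding M3_def using M2 before i by (intro improving_3swapI[OF M2 pl]) (auto simp: M2_def)
  have "M3 \<subseteq> jobs n" using M2 i unfolding M3_def by auto
  then have "omega n M3 i = 0" "omega n M3 (i + 1) = 1"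
    using before i by (auto simp: omega_eq_0_iff omega_eq_1_iff M3_def M2_def)
  with step1 step2 show ?thesis by (meson rtranclp.rtrancl_into_rtrancl rtranclp.rtrancl_refl)
qed

theorem lemma8:
  fixes n :: nat
  assumes "n \<ge> 2"
  shows "\<exists>P. \<forall>pl \<ge> P. \<forall>M1. M1 \<subseteq> jobs n \<and> omega n M1 1 = 1 \<and> omega n M1 2 = 0 \<and> JL \<in> M1 \<longrightarrow>
           (\<exists>M1'. (improving_3swap n pl)\<^sup>*\<^sup>* M1 M1' \<and> omega n M1' 1 = 0 \<and> omega n M1' 2 = 1)"
proof (intro exI[of _ "load n 0 (jobs n - {JL})"] allI impI)
  fix pl M1
  assume "load n 0 (jobs n - {JL}) \<le> pl"
    and "M1 \<subseteq> jobs n \<and> omega n M1 1 = 1 \<and> omega n M1 2 = 0 \<and> JL \<in> M1"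
  with exchange_adjacent_pairs[of 1 n pl M1] assms
  show "\<exists>M1'. (improving_3swap n pl)\<^sup>*\<^sup>* M1 M1' \<and> omega n M1' 1 = 0 \<and> omega n M1' 2 = 1"
    by (simp add: numeral_2_eq_2)
qed

end
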